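(* Let $(k^\times)^{\mathbb{Z}}$ be the group of all sequences $\alpha=(\alpha_n)_{n\in\mathbb{Z}}$ of nonzero elements of $k$ under componentwise multiplication. For $\alpha\in(k^\times)^{\mathbb{Z}}$ let $\phi_\alpha:H\to H$ be the linear map with $$\phi_\alpha(x^n)=x^n,\qquad \phi_\alpha(x^ny^m)=\Big(\prod_{i=0}^{m-1}\alpha_{n+i}\Big)x^ny^m\quad(n\in\mathbb{Z},\ m\geq 1).$$ Then the map $(k^\times)^{\mathbb{Z}}\to \mathrm{Aut}_0^{gr}(H)$, $\alpha\mapsto\phi_\alpha$, is a group isomorphism.
   Context: Let $k$ be a field and $0\neq q\in k$ not a root of unity. Let $H=k_q[x,x^{-1},y]$ be the $k$-algebra generated by $x,x^{-1},y$ subject to $xx^{-1}=x^{-1}x=1$, $yx=qxy$. It is a Hopf algebra with $\Delta(x)=x\otimes x$, $\Delta(x^{-1})=x^{-1}\otimes x^{-1}$, $\Delta(y)=y\otimes x+1\otimes y$, $\varepsilon(x)=\varepsilon(x^{-1})=1$, $\varepsilon(y)=0$, $S(x)=x^{-1}$, $S(y)=-yx^{-1}$. The elements $x^ny^m$ ($n\in\mathbb{Z}$, $m\in\mathbb{N}$) form a $k$-basis, and $\Delta(x^ny^m)=\sum_{i=0}^m\binom{m}{i}_q x^ny^i\otimes x^{n+i}y^{m-i}$, where $(n)_q=1+q+\cdots+q^{n-1}$, $(n)!_q=(n)_q(n-1)_q\cdots(1)_q$, $(0)!_q=1$, and $\binom{m}{i}_q=\frac{(m)!_q}{(i)!_q(m-i)!_q}$.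 Let $H_0=\mathrm{span}\{x^n:n\in\mathbb{Z}\}$ and $H(m)=H_0y^m$; then $H=\bigoplus_{m\geq0}H(m)$ is a graded coalgebra. $\mathrm{Aut}_c(H)$ is the group (under composition) of all coalgebra automorphisms of $H$; $\mathrm{Aut}_0(H)=\{\phi\in\mathrm{Aut}_c(H):\phi(1)=1\}$; $\mathrm{Aut}_c^{gr}(H)=\{\phi\in\mathrm{Aut}_c(H):\phi(H(m))\subseteq H(m)\ \forall m\geq0\}$; $\mathrm{Aut}_0^{gr}(H)=\mathrm{Aut}_c^{gr}(H)\cap\mathrm{Aut}_0(H)$. *)

theory Defs
  imports "HOL-Library.Poly_Mapping" "HOL-Algebra.Group"
begin

text \<open>The coalgebra H = k_q[x,x^-1,y] is modelled as the free k-vector space on the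
basis x^n y^m, indexed by (n,m) :: int \<times> nat, i.e. finitely supported functions.
H \<otimes> H is the free vector space on pairs of basis elements.\<close>

type_synonym 'k hopf = "(int \<times> nat) \<Rightarrow>\<^sub>0 'k"
type_synonym 'k hopf2 = "((int \<times> nat) \<times> (int \<times> nat)) \<Rightarrow>\<^sub>0 'k"

definition pm_scale :: "'k::field \<Rightarrow> ('b \<Rightarrow>\<^sub>0 'k) \<Rightarrow> ('b \<Rightarrow>\<^sub>0 'k)" where
  "pm_scale c u = Poly_Mapping.map (\<lambda>a. c * a) u"

definition qint :: "'k::field \<Rightarrow> nat \<Rightarrow> 'k" where
  "qint q n = (\<Sum>i<n. q ^ i)"

definition qfact :: "'k::field \<Rightarrow> nat \<Rightarrow> 'k" where
  "qfact q n = (\<Prod>i\<in>{1..n}. qint q i)"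

definition qbinom :: "'k::field \<Rightarrow> nat \<Rightarrow> nat \<Rightarrow> 'k" where
  "qbinom q m i = qfact q m / (qfact q i * qfact q (m - i))"

definition bas :: "int \<Rightarrow> nat \<Rightarrow> 'k::field hopf" where
  "bas n m = Poly_Mapping.single (n, m) 1"

definition comult_basis :: "'k::field \<Rightarrow> int \<times> nat \<Rightarrow> 'k hopf2" where
  "comult_basis q b = (case b of (n, m) \<Rightarrow>
     (\<Sum>i\<in>{0..m}. Poly_Mapping.single ((n, i), (n + int i, m - i)) (qbinom q m i)))"

definition comult :: "'k::field \<Rightarrow> 'k hopf \<Rightarrow> 'k hopf2" where
  "comult q u = (\<Sum>b\<in>Poly_Mapping.keys u. pm_scale (Poly_Mapping.lookup u b) (comult_basis q b))"

definition counit :: "'k::field hopf \<Rightarrow> 'k" where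
  "counit u = (\<Sum>b\<in>Poly_Mapping.keys u. if snd b = 0 then Poly_Mapping.lookup u b else 0)"

definition tens :: "'k::field hopf \<Rightarrow> 'k hopf \<Rightarrow> 'k hopf2" where
  "tens u v = (\<Sum>b\<in>Poly_Mapping.keys u. \<Sum>c\<in>Poly_Mapping.keys v. Poly_Mapping.single (b, c) (Poly_Mapping.lookup u b * Poly_Mapping.lookup v c))"

text \<open>f \<otimes> g applied to an element of H \<otimes> H (for linear f, g)\<close>
definition map_tens :: "('k::field hopf \<Rightarrow> 'k hopf) \<Rightarrow> ('k hopf \<Rightarrow> 'k hopf) \<Rightarrow> 'k hopf2 \<Rightarrow> 'k hopf2" where
  "map_tens f g t = (\<Sum>bc\<in>Poly_Mapping.keys t.
      pm_scale (Poly_Mapping.lookup t bc) (tens (f (Poly_Mapping.single (fst bc) 1)) (g (Poly_Mapping.single (snd bc) 1))))"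

definition is_linear :: "('k::field hopf \<Rightarrow> 'k hopf) \<Rightarrow> bool" where
  "is_linear f \<longleftrightarrow> (\<forall>u v. f (u + v) = f u + f v) \<and> (\<forall>c u. f (pm_scale c u) = pm_scale c (f u))"

definition coalg_map :: "'k::field \<Rightarrow> ('k hopf \<Rightarrow> 'k hopf) \<Rightarrow> bool" where
  "coalg_map q f \<longleftrightarrow> is_linear f
     \<and> (\<forall>u. comult q (f u) = map_tens f f (comult q u))
     \<and> (\<forall>u. counit (f u) = counit u)"

definition Aut_c :: "'k::field \<Rightarrow> ('k hopf \<Rightarrow> 'k hopf) set" where
  "Aut_c q = {f. coalg_map q f \<and> bij f}"

definition Aut_0 :: "'k::field \<Rightarrow> ('k hopf \<Rightarrow> 'k hopf) set" where
  "Aut_0 q = {f \<in> Aut_c q. f (bas 0 0) = bas 0 0}"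

definition Hdeg :: "nat \<Rightarrow> 'k::field hopf set" where
  "Hdeg m = {u. \<forall>b\<in>Poly_Mapping.keys u. snd b = m}"

definition Aut_c_gr :: "'k::field \<Rightarrow> ('k hopf \<Rightarrow> 'k hopf) set" where
  "Aut_c_gr q = {f \<in> Aut_c q. \<forall>m. f ` Hdeg m \<subseteq> Hdeg m}"

definition Aut_0_gr :: "'k::field \<Rightarrow> ('k hopf \<Rightarrow> 'k hopf) set" where
  "Aut_0_gr q = Aut_c_gr q \<inter> Aut_0 q"

definition Aut_0_gr_group :: "'k::field \<Rightarrow> ('k hopf \<Rightarrow> 'k hopf) monoid" where
  "Aut_0_gr_group q = \<lparr>carrier = Aut_0_gr q, mult = (\<circ>), one = id\<rparr>"

definition seq_group :: "(int \<Rightarrow> 'k::field) monoid" where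
  "seq_group = \<lparr>carrier = {\<alpha>. \<forall>n. \<alpha> n \<noteq> 0}, mult = (\<lambda>\<alpha> \<beta> n. \<alpha> n * \<beta> n), one = (\<lambda>n. 1)\<rparr>"

definition phi_alpha :: "(int \<Rightarrow> 'k::field) \<Rightarrow> 'k hopf \<Rightarrow> 'k hopf" where
  "phi_alpha \<alpha> u = (\<Sum>b\<in>Poly_Mapping.keys u. case b of (n, m) \<Rightarrow>
      Poly_Mapping.single (n, m) ((\<Prod>i<m. \<alpha> (n + int i)) * Poly_Mapping.lookup u (n, m)))"

end

theory Submission
  imports Defs
begin

text \<open>Each \<open>\<phi>\<^sub>\<alpha>\<close> acts diagonally on the basis \<open>x^n y^m\<close>, so \<open>\<phi>\<^sub>\<alpha> \<circ> \<phi>\<^sub>\<beta> = \<phi>\<^sub>\<alpha>\<^sub>\<beta>\<close>, and it is a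
coalgebra map because its weight \<open>\<Prod>i<m. \<alpha>(n+i)\<close> splits multiplicatively along the decomposition
\<open>m = i + (m - i)\<close> performed by \<open>\<Delta>\<close>.  Conversely, let \<open>f\<close> be an injective graded coalgebra map
with \<open>f(1) = 1\<close> and let \<open>g(n,m,a)\<close> be the coefficient of \<open>x^a y^m\<close> in \<open>f(x^n y^m)\<close>.  Comparing
coefficients in \<open>\<Delta> \<circ> f = (f \<otimes> f) \<circ> \<Delta>\<close> gives, for \<open>i \<le> m\<close>,
  \<open>binom(m,i)_q g(n,i,a) g(n+i,m-i,c) = [c = a+i] binom(m,i)_q g(n,m,a)\<close>.
For \<open>m = 0\<close> this says that \<open>g(n,0,-)\<close> is a nonzero idempotent, hence an indicator, so
\<open>f(x^n) = x^\<sigma>(n)\<close>; the case \<open>m = 1\<close> forces \<open>\<sigma>(n+1) = \<sigma>(n) + 1\<close>, and \<open>f(1) = 1\<close> gives \<open>\<sigma> = id\<close>.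
As \<open>q\<close> is not a root of unity, \<open>binom(m,0)_q = 1\<close> and \<open>binom(m,1)_q = (m)_q \<noteq> 0\<close>, so the cases
\<open>i = 0, 1\<close> determine \<open>f\<close> degree by degree: \<open>f = \<phi>\<^sub>\<alpha>\<close> with \<open>\<alpha>(n) = g(n,1,n)\<close>.\<close>

lemma lookup_pm_scale [simp]:
  "Poly_Mapping.lookup (pm_scale c u) b = c * Poly_Mapping.lookup u b"
  by (simp add: pm_scale_def Poly_Mapping.map.rep_eq when_def)

lemma lookup_bas: "Poly_Mapping.lookup (bas n m) k = (if k = (n, m) then 1 else 0)"
  by (simp add: bas_def lookup_single when_def)

lemma bas_in_Hdeg: "bas n m \<in> Hdeg m"
  by (simp add: bas_def Hdeg_def)

lemma lookup_Hdeg_other_degree: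
  "u \<in> Hdeg m \<Longrightarrow> i \<noteq> m \<Longrightarrow> Poly_Mapping.lookup u (a, i) = 0"
  unfolding Hdeg_def using in_keys_iff[of "(a, i)" u] by fastforce

lemma is_linear_zero: "is_linear f \<Longrightarrow> f 0 = 0"
  unfolding is_linear_def by (metis add_cancel_right_right add_0)

lemma is_linear_sum: "is_linear f \<Longrightarrow> f (sum g S) = (\<Sum>s\<in>S. f (g s))"
proof (induction S rule: infinite_finite_induct)
  case (insert x F)
  then show ?case unfolding is_linear_def by simp
qed (auto simp: is_linear_zero)

lemma poly_mapping_basis_expansion:
  "u = (\<Sum>b\<in>Poly_Mapping.keys u. pm_scale (Poly_Mapping.lookup u b) (Poly_Mapping.single b 1))"
proof (rule poly_mapping_eqI)
  fix k
  have "Poly_Mapping.lookup (\<Sum>b\<in>Poly_Mapping.keys u.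
          pm_scale (Poly_Mapping.lookup u b) (Poly_Mapping.single b 1)) k
      = (\<Sum>b\<in>Poly_Mapping.keys u. if b = k then Poly_Mapping.lookup u k else 0)"
    unfolding lookup_sum by (rule sum.cong) (simp_all add: lookup_single when_def)
  also have "\<dots> = Poly_Mapping.lookup u k" by (simp add: in_keys_iff)
  finally show "Poly_Mapping.lookup u k = Poly_Mapping.lookup (\<Sum>b\<in>Poly_Mapping.keys u.
          pm_scale (Poly_Mapping.lookup u b) (Poly_Mapping.single b 1)) k" ..
qed

lemma is_linear_expansion:
  assumes "is_linear f"
  shows "f u = (\<Sum>b\<in>Poly_Mapping.keys u.
                  pm_scale (Poly_Mapping.lookup u b) (f (Poly_Mapping.single b 1)))"
proof -
  have "f u = (\<Sum>b\<in>Poly_Mapping.keys u.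
                 f (pm_scale (Poly_Mapping.lookup u b) (Poly_Mapping.single b 1)))"
    by (subst poly_mapping_basis_expansion) (rule is_linear_sum[OF assms])
  then show ?thesis using assms by (simp add: is_linear_def)
qed

lemma is_linear_eqI:
  assumes "is_linear f" "is_linear g" "\<And>n m. f (bas n m) = g (bas n m)"
  shows "f = g"
proof
  fix u
  have "\<And>b. f (Poly_Mapping.single b 1) = g (Poly_Mapping.single b 1)"
    using assms(3) by (metis bas_def prod.exhaust)
  then show "f u = g u"
    by (simp only: is_linear_expansion[OF assms(1), of u] is_linear_expansion[OF assms(2), of u])
qed

lemma lookup_comult_basis:
  "Poly_Mapping.lookup (comult_basis q (n, m)) ((a, i), (c, j)) =
     (if a = n \<and> c = n + int i \<and> i + j = m then qbinom q m i else 0)"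
proof -
  have "Poly_Mapping.lookup (comult_basis q (n, m)) ((a, i), (c, j)) =
     (\<Sum>l\<in>{0..m}. if l = i then (if a = n \<and> c = n + int i \<and> j = m - i then qbinom q m i else 0)
                  else 0)"
    unfolding comult_basis_def prod.case lookup_sum
    by (rule sum.cong) (auto simp: lookup_single when_def)
  then show ?thesis by auto
qed

lemma lookup_comult:
  "Poly_Mapping.lookup (comult q u) ((a, i), (c, j)) =
     (if c = a + int i then qbinom q (i + j) i * Poly_Mapping.lookup u (a, i + j) else 0)"
proof -
  have "Poly_Mapping.lookup (comult q u) ((a, i), (c, j)) =
     (\<Sum>b\<in>Poly_Mapping.keys u. if b = (a, i + j)
        then (if c = a + int i then qbinom q (i + j) i * Poly_Mapping.lookup u (a, i + j) else 0)
        else 0)"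
    unfolding comult_def lookup_sum
    by (rule sum.cong) (auto simp: lookup_comult_basis split: if_split_asm)
  then show ?thesis by (simp add: in_keys_iff)
qed

lemma keys_comult_bas:
  "Poly_Mapping.keys (comult q (bas n m)) \<subseteq> (\<lambda>l. ((n, l), (n + int l, m - l))) ` {0..m}"
proof
  fix k assume k: "k \<in> Poly_Mapping.keys (comult q (bas n m))"
  obtain a i c j where kk: "k = ((a, i), (c, j))" by (metis prod.exhaust)
  from k have "c = a + int i" "a = n" "i + j = m"
    unfolding kk in_keys_iff lookup_comult lookup_bas by (auto split: if_splits)
  then show "k \<in> (\<lambda>l. ((n, l), (n + int l, m - l))) ` {0..m}"
    unfolding kk by (intro image_eqI[where x = i]) auto
qed

lemma lookup_tens:
  "Poly_Mapping.lookup (tens u v) (b, c) = Poly_Mapping.lookup u b * Poly_Mapping.lookup v c"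
proof -
  have "Poly_Mapping.lookup (tens u v) (b, c) = (\<Sum>b'\<in>Poly_Mapping.keys u. \<Sum>c'\<in>Poly_Mapping.keys v.
          if b' = b \<and> c' = c then Poly_Mapping.lookup u b' * Poly_Mapping.lookup v c' else 0)"
    unfolding tens_def lookup_sum by (simp add: lookup_single when_def)
  also have "\<dots> = (\<Sum>b'\<in>Poly_Mapping.keys u. if b' = b then (\<Sum>c'\<in>Poly_Mapping.keys v.
          if c' = c then Poly_Mapping.lookup u b' * Poly_Mapping.lookup v c' else 0) else 0)"
    by (rule sum.cong) (auto intro: sum.cong)
  finally show ?thesis by (simp add: in_keys_iff)
qed

lemma lookup_map_tens:
  "Poly_Mapping.lookup (map_tens f g t) (b, c) =
     (\<Sum>bc\<in>Poly_Mapping.keys t. Poly_Mapping.lookup t bc *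
        (Poly_Mapping.lookup (f (Poly_Mapping.single (fst bc) 1)) b *
         Poly_Mapping.lookup (g (Poly_Mapping.single (snd bc) 1)) c))"
  unfolding map_tens_def lookup_sum by (simp add: lookup_tens)

lemma lookup_map_tens_comult_bas:
  "Poly_Mapping.lookup (map_tens f g (comult q (bas n m))) (b, c) =
     (\<Sum>l\<in>{0..m}. qbinom q m l *
        (Poly_Mapping.lookup (f (bas n l)) b * Poly_Mapping.lookup (g (bas (n + int l) (m - l))) c))"
proof -
  let ?S = "(\<lambda>l. ((n, l), (n + int l, m - l))) ` {0..m}"
  have "Poly_Mapping.lookup (map_tens f g (comult q (bas n m))) (b, c) =
     (\<Sum>bc\<in>?S. Poly_Mapping.lookup (comult q (bas n m)) bc *
        (Poly_Mapping.lookup (f (Poly_Mapping.single (fst bc) 1)) b *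
         Poly_Mapping.lookup (g (Poly_Mapping.single (snd bc) 1)) c))"
    unfolding lookup_map_tens
    by (rule sum.mono_neutral_left) (auto simp: in_keys_iff dest: subsetD[OF keys_comult_bas])
  also have "\<dots> = (\<Sum>l\<in>{0..m}. qbinom q m l *
        (Poly_Mapping.lookup (f (bas n l)) b * Poly_Mapping.lookup (g (bas (n + int l) (m - l))) c))"
    by (subst sum.reindex) (auto simp: inj_on_def bas_def lookup_comult lookup_bas intro!: sum.cong)
  finally show ?thesis .
qed

subsection \<open>Gaussian binomials at a non-root of unity\<close>

lemma qint_nonzero:
  fixes q :: "'k::field"
  assumes "\<forall>n::nat. n > 0 \<longrightarrow> q ^ n \<noteq> 1" "i > 0"
  shows "qint q i \<noteq> 0"
proof -
  have q1: "q \<noteq> 1" using assms(1) by (metis power_one_right zero_less_one)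
  then have "qint q i = (q ^ i - 1) / (q - 1)" unfolding qint_def by (rule geometric_sum)
  with assms q1 show ?thesis by simp
qed

lemma qfact_nonzero:
  "(\<And>i. 0 < i \<Longrightarrow> qint q i \<noteq> 0) \<Longrightarrow> qfact q m \<noteq> 0"
  unfolding qfact_def by (simp add: prod_zero_iff)

lemma qbinom_zero_right: "qfact q m \<noteq> 0 \<Longrightarrow> qbinom q m 0 = 1"
  by (simp add: qbinom_def qfact_def)

lemma qbinom_one_right: "qfact q m \<noteq> 0 \<Longrightarrow> qbinom q (Suc m) 1 = qint q (Suc m)"
  by (simp add: qbinom_def qfact_def qint_def atLeastAtMostSuc_conv)

lemma qbinom_self_small: "qbinom q 0 0 = 1" "qbinom q (Suc 0) 0 = 1" "qbinom q (Suc 0) (Suc 0) = 1"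
  by (simp_all add: qbinom_def qfact_def qint_def)

subsection \<open>The automorphisms \<open>\<phi>\<^sub>\<alpha>\<close>\<close>

definition seq_prod :: "(int \<Rightarrow> 'k::field) \<Rightarrow> int \<Rightarrow> nat \<Rightarrow> 'k" where
  "seq_prod \<alpha> n m = (\<Prod>i<m. \<alpha> (n + int i))"

lemma seq_prod_0 [simp]: "seq_prod \<alpha> n 0 = 1"
  by (simp add: seq_prod_def)

lemma seq_prod_add: "seq_prod \<alpha> n (i + j) = seq_prod \<alpha> n i * seq_prod \<alpha> (n + int i) j"
  by (induction j) (simp_all add: seq_prod_def algebra_simps)

lemma seq_prod_Suc: "seq_prod \<alpha> n (Suc m) = \<alpha> n * seq_prod \<alpha> (n + 1) m"
  unfolding seq_prod_def prod.lessThan_Suc_shift by (simp add: algebra_simps)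

lemma seq_prod_mult: "seq_prod (\<lambda>n. \<alpha> n * \<beta> n) n m = seq_prod \<alpha> n m * seq_prod \<beta> n m"
  by (simp add: seq_prod_def prod.distrib)

lemma lookup_phi_alpha:
  "Poly_Mapping.lookup (phi_alpha \<alpha> u) k = seq_prod \<alpha> (fst k) (snd k) * Poly_Mapping.lookup u k"
proof -
  have "Poly_Mapping.lookup (phi_alpha \<alpha> u) k = (\<Sum>b\<in>Poly_Mapping.keys u.
          if b = k then seq_prod \<alpha> (fst k) (snd k) * Poly_Mapping.lookup u k else 0)"
    unfolding phi_alpha_def lookup_sum
    by (rule sum.cong) (auto simp: lookup_single when_def seq_prod_def)
  then show ?thesis by (simp add: in_keys_iff)
qed

lemma keys_phi_alpha: "Poly_Mapping.keys (phi_alpha \<alpha> u) \<subseteq> Poly_Mapping.keys u"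
  by (auto simp: in_keys_iff lookup_phi_alpha)

lemma phi_alpha_linear: "is_linear (phi_alpha \<alpha>)"
  unfolding is_linear_def
  by (auto intro!: poly_mapping_eqI simp: lookup_phi_alpha lookup_add algebra_simps)

lemma phi_alpha_mult: "phi_alpha (\<lambda>n. \<alpha> n * \<beta> n) = phi_alpha \<alpha> \<circ> phi_alpha \<beta>"
  by (auto intro!: ext poly_mapping_eqI simp: lookup_phi_alpha seq_prod_mult)

lemma phi_alpha_one: "phi_alpha (\<lambda>n. 1) = id"
  by (auto intro!: ext poly_mapping_eqI simp: lookup_phi_alpha seq_prod_def)

lemma bij_phi_alpha:
  assumes "\<forall>n. \<alpha> n \<noteq> 0"
  shows "bij (phi_alpha \<alpha>)"
proof (rule o_bij)
  show "phi_alpha (\<lambda>n. inverse (\<alpha> n)) \<circ> phi_alpha \<alpha> = id"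
    "phi_alpha \<alpha> \<circ> phi_alpha (\<lambda>n. inverse (\<alpha> n)) = id"
    using assms by (simp_all flip: phi_alpha_mult add: phi_alpha_one)
qed

lemma comult_phi_alpha:
  "comult q (phi_alpha \<alpha> u) = map_tens (phi_alpha \<alpha>) (phi_alpha \<alpha>) (comult q u)"
proof (rule poly_mapping_eqI)
  fix k :: "(int \<times> nat) \<times> (int \<times> nat)"
  obtain a i c j where k: "k = ((a, i), (c, j))" by (metis prod.exhaust)
  have "Poly_Mapping.lookup (map_tens (phi_alpha \<alpha>) (phi_alpha \<alpha>) (comult q u)) k =
     (\<Sum>bc\<in>Poly_Mapping.keys (comult q u). if bc = k then Poly_Mapping.lookup (comult q u) k *
        (seq_prod \<alpha> a i * seq_prod \<alpha> c j) else 0)"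
    unfolding k lookup_map_tens
    by (rule sum.cong) (auto simp: lookup_phi_alpha lookup_single when_def)
  also have "\<dots> = Poly_Mapping.lookup (comult q u) k * (seq_prod \<alpha> a i * seq_prod \<alpha> c j)"
    by (simp add: in_keys_iff)
  finally show "Poly_Mapping.lookup (comult q (phi_alpha \<alpha> u)) k =
      Poly_Mapping.lookup (map_tens (phi_alpha \<alpha>) (phi_alpha \<alpha>) (comult q u)) k"
    unfolding k by (simp add: lookup_comult lookup_phi_alpha seq_prod_add)
qed

lemma counit_phi_alpha: "counit (phi_alpha \<alpha> u) = counit u"
proof -
  have "counit (phi_alpha \<alpha> u) = (\<Sum>b\<in>Poly_Mapping.keys u.
          if snd b = 0 then Poly_Mapping.lookup (phi_alpha \<alpha> u) b else 0)"
    unfolding counit_def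
    by (rule sum.mono_neutral_left) (auto simp: in_keys_iff dest: subsetD[OF keys_phi_alpha])
  then show ?thesis unfolding counit_def by (auto simp: lookup_phi_alpha intro: sum.cong)
qed

lemma phi_alpha_Hdeg: "u \<in> Hdeg m \<Longrightarrow> phi_alpha \<alpha> u \<in> Hdeg m"
  using keys_phi_alpha unfolding Hdeg_def by blast

lemma phi_alpha_unit: "phi_alpha \<alpha> (bas 0 0) = bas 0 0"
  by (auto intro!: poly_mapping_eqI simp: lookup_phi_alpha lookup_bas)

lemma phi_alpha_in_Aut_0_gr:
  "\<forall>n. \<alpha> n \<noteq> 0 \<Longrightarrow> phi_alpha \<alpha> \<in> Aut_0_gr q"
  unfolding Aut_0_gr_def Aut_c_gr_def Aut_0_def Aut_c_def coalg_map_def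
  using phi_alpha_linear comult_phi_alpha counit_phi_alpha bij_phi_alpha phi_alpha_Hdeg
    phi_alpha_unit
  by blast

lemma inj_phi_alpha: "inj phi_alpha"
proof (rule injI)
  fix \<alpha> \<beta> :: "int \<Rightarrow> 'k::field"
  assume "phi_alpha \<alpha> = phi_alpha \<beta>"
  then have "Poly_Mapping.lookup (phi_alpha \<alpha> (bas n 1)) (n, 1) =
             Poly_Mapping.lookup (phi_alpha \<beta> (bas n 1)) (n, 1)" for n
    by simp
  then show "\<alpha> = \<beta>" by (auto simp: lookup_phi_alpha lookup_bas seq_prod_def)
qed

subsection \<open>Graded coalgebra monomorphisms fixing \<open>1\<close>\<close>

lemma indicator_of_idempotent_family:
  fixes g :: "'a \<Rightarrow> 'k::field"
  assumes idem: "\<And>a c. g a * g c = (if c = a then g a else 0)" and "g s \<noteq> 0"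
  shows "g c = (if c = s then 1 else 0)"
proof -
  have "g s * g s = g s" using idem[of s s] by simp
  then have "g s = 1" using \<open>g s \<noteq> 0\<close> by simp
  moreover have "c \<noteq> s \<Longrightarrow> g c = 0" using idem[of s c] \<open>g s \<noteq> 0\<close> by simp
  ultimately show ?thesis by simp
qed

locale graded_coalg_mono =
  fixes q :: "'k::field" and f :: "'k hopf \<Rightarrow> 'k hopf"
  assumes linear: "is_linear f"
    and comult: "\<And>u. comult q (f u) = map_tens f f (comult q u)"
    and inj: "inj f"
    and graded: "\<And>u m. u \<in> Hdeg m \<Longrightarrow> f u \<in> Hdeg m"
    and unit: "f (bas 0 0) = bas 0 0"
begin

definition coeff :: "int \<Rightarrow> nat \<Rightarrow> int \<Rightarrow> 'k" where
  "coeff n m a = Poly_Mapping.lookup (f (bas n m)) (a, m)"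

lemma lookup_f_bas:
  "Poly_Mapping.lookup (f (bas n m)) (a, i) = (if i = m then coeff n m a else 0)"
  using lookup_Hdeg_other_degree[OF graded[OF bas_in_Hdeg]] by (simp add: coeff_def)

lemma coeff_comult:
  assumes "i \<le> m"
  shows "qbinom q m i * (coeff n i a * coeff (n + int i) (m - i) c) =
           (if c = a + int i then qbinom q m i * coeff n m a else 0)"
proof -
  have "qbinom q m i * (coeff n i a * coeff (n + int i) (m - i) c) =
      (\<Sum>l\<in>{0..m}. if l = i then
                    qbinom q m i * (coeff n i a * coeff (n + int i) (m - i) c) else 0)"
    using assms by simp
  also have "\<dots> = (\<Sum>l\<in>{0..m}. qbinom q m l * (Poly_Mapping.lookup (f (bas n l)) (a, i) *
                    Poly_Mapping.lookup (f (bas (n + int l) (m - l))) (c, m - i)))"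
    by (rule sum.cong) (auto simp: lookup_f_bas)
  also have "\<dots> = Poly_Mapping.lookup (comult q (f (bas n m))) ((a, i), (c, m - i))"
    by (simp add: comult lookup_map_tens_comult_bas)
  also have "\<dots> = (if c = a + int i then qbinom q m i * coeff n m a else 0)"
    using assms lookup_comult[of q "f (bas n m)" a i c "m - i"] by (simp add: lookup_f_bas)
  finally show ?thesis .
qed

lemma coeff_nonzero: "\<exists>a. coeff n m a \<noteq> 0"
proof (rule ccontr)
  assume "\<nexists>a. coeff n m a \<noteq> 0"
  then have "f (bas n m) = f 0"
    by (auto intro!: poly_mapping_eqI simp: lookup_f_bas is_linear_zero[OF linear])
  then have "bas n m = (0 :: 'k hopf)" using inj by (simp add: inj_eq)
  then have "Poly_Mapping.lookup (bas n m :: 'k hopf) (n, m) = 0" by simp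
  then show False by (simp add: lookup_bas)
qed

lemma coeff_0_eq_indicator:
  assumes "coeff n 0 s \<noteq> 0"
  shows "coeff n 0 c = (if c = s then 1 else 0)"
  using coeff_comult[of 0 0 n] assms
  by (intro indicator_of_idempotent_family[where g = "coeff n 0"]) (simp add: qbinom_self_small)

lemma coeff_0_shift:
  assumes "coeff n 0 s \<noteq> 0"
  shows "coeff (n + 1) 0 (s + 1) = 1"
proof -
  obtain a where a: "coeff n 1 a \<noteq> 0" using coeff_nonzero by blast
  have "coeff n 0 a * coeff n 1 a = coeff n 1 a"
    using coeff_comult[of 0 1 n a a] by (simp add: qbinom_self_small)
  then have "coeff n 0 a \<noteq> 0" using a by auto
  then have "a = s" using coeff_0_eq_indicator[OF assms, of a] by (simp split: if_splits)
  moreover have "coeff n 1 a * coeff (n + 1) 0 (a + 1) = coeff n 1 a"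
    using coeff_comult[of 1 1 n a "a + 1"] by (simp add: qbinom_self_small)
  ultimately show ?thesis using a by simp
qed

lemma coeff_0: "coeff n 0 a = (if a = n then 1 else 0)"
proof (induction n arbitrary: a rule: int_induct[where k = 0])
  case base
  show ?case using unit by (simp add: coeff_def lookup_bas)
next
  case (step1 n)
  then have "coeff (n + 1) 0 (n + 1) = 1" using coeff_0_shift[of n n] by simp
  then show ?case using coeff_0_eq_indicator[of "n + 1" "n + 1"] by simp
next
  case (step2 n)
  obtain s where s: "coeff (n - 1) 0 s \<noteq> 0" using coeff_nonzero by blast
  have "coeff n 0 (s + 1) = 1" using coeff_0_shift[OF s] by simp
  then have "s = n - 1" using step2.IH[of "s + 1"] by (simp split: if_splits)
  then show ?case using coeff_0_eq_indicator[OF s] by simp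
qed

lemma coeff_1: "coeff n 1 c = (if c = n then coeff n 1 n else 0)"
  using coeff_comult[of 0 1 n n c] by (simp add: qbinom_self_small coeff_0)

lemma coeff_1_nonzero: "coeff n 1 n \<noteq> 0"
  using coeff_nonzero[of n 1] coeff_1 by metis

lemma coeff_eq_seq_prod:
  assumes "\<And>i. 0 < i \<Longrightarrow> qint q i \<noteq> 0"
  shows "coeff n m a = (if a = n then seq_prod (\<lambda>n. coeff n 1 n) n m else 0)"
proof (induction m arbitrary: n a)
  case 0
  show ?case by (simp add: coeff_0)
next
  case (Suc m)
  have qfact: "qfact q m' \<noteq> 0" for m' using qfact_nonzero assms by blast
  have qbinom_0: "qbinom q (Suc m) 0 = 1" by (rule qbinom_zero_right[OF qfact])
  have qbinom_1: "qbinom q (Suc m) 1 \<noteq> 0"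
    using qbinom_one_right[OF qfact, of m] assms[of "Suc m"] by simp
  have "coeff n (Suc m) a = (if a = n then coeff n (Suc m) n else 0)"
    using coeff_comult[of 0 "Suc m" n n a] by (simp add: qbinom_0 coeff_0)
  moreover have "coeff n (Suc m) n = coeff n 1 n * coeff (n + 1) m (n + 1)"
    using coeff_comult[of 1 "Suc m" n n "n + 1"] qbinom_1 by simp
  ultimately show ?case by (simp add: Suc.IH seq_prod_Suc)
qed

lemma eq_phi_alpha:
  assumes "\<And>i. 0 < i \<Longrightarrow> qint q i \<noteq> 0"
  shows "f = phi_alpha (\<lambda>n. coeff n 1 n)"
proof (rule is_linear_eqI[OF linear phi_alpha_linear])
  fix n m
  show "f (bas n m) = phi_alpha (\<lambda>n. coeff n 1 n) (bas n m)"
  proof (rule poly_mapping_eqI)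
    fix k :: "int \<times> nat"
    obtain a i where k: "k = (a, i)" by fastforce
    show "Poly_Mapping.lookup (f (bas n m)) k =
          Poly_Mapping.lookup (phi_alpha (\<lambda>n. coeff n 1 n) (bas n m)) k"
      using coeff_eq_seq_prod[OF assms, of n m a]
      by (simp add: k lookup_f_bas lookup_phi_alpha lookup_bas)
  qed
qed

end

lemma Aut_0_gr_imp_graded_coalg_mono: "f \<in> Aut_0_gr q \<Longrightarrow> graded_coalg_mono q f"
  unfolding Aut_0_gr_def Aut_c_gr_def Aut_0_def Aut_c_def coalg_map_def bij_def
  by unfold_locales blast+

theorem theorem2p12:
  fixes q :: "'k::field"
  assumes "q \<noteq> 0"
    and "\<forall>n::nat. n > 0 \<longrightarrow> q ^ n \<noteq> 1"
  shows "(phi_alpha :: (int \<Rightarrow> 'k) \<Rightarrow> 'k hopf \<Rightarrow> 'k hopf) \<in> iso seq_group (Aut_0_gr_group q)"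
proof -
  have qint: "\<And>i. 0 < i \<Longrightarrow> qint q i \<noteq> 0" using qint_nonzero[OF assms(2)] .
  have "phi_alpha \<in> hom seq_group (Aut_0_gr_group q)"
    by (rule homI) (auto simp: seq_group_def Aut_0_gr_group_def phi_alpha_in_Aut_0_gr phi_alpha_mult)
  moreover have "phi_alpha ` carrier seq_group = Aut_0_gr q"
  proof
    show "phi_alpha ` carrier seq_group \<subseteq> Aut_0_gr q"
      by (auto simp: seq_group_def phi_alpha_in_Aut_0_gr)
    show "Aut_0_gr q \<subseteq> phi_alpha ` carrier seq_group"
    proof
      fix f assume "f \<in> Aut_0_gr q"
      then interpret graded_coalg_mono q f by (rule Aut_0_gr_imp_graded_coalg_mono)
      have "f = phi_alpha (\<lambda>n. coeff n 1 n)" using qint by (rule eq_phi_alpha)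
      then show "f \<in> phi_alpha ` carrier seq_group"
        by (rule image_eqI[where f = phi_alpha]) (use coeff_1_nonzero in \<open>simp add: seq_group_def\<close>)
    qed
  qed
  moreover have "inj_on phi_alpha (carrier seq_group)"
    using inj_phi_alpha by (rule inj_on_subset) simp
  ultimately show ?thesis
    by (simp add: iso_def bij_betw_def Aut_0_gr_group_def)
qed

end
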